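(* Let $\hat{\mathbf A}\in\mathbb R^{p\times r}$ and an orthogonal $\hat{\mathbf P}\in\mathbb R^{r\times r}$ be random with $(\hat{\mathbf A},\hat{\mathbf P})$ independent of $\{\omega_{ij}:i\in\mathcal N_2,j\in[p]\}$, and set $\mathbf A^*=\mathbf V_r^*\hat{\mathbf P}$, $\boldsymbol\Theta^*=\mathbf U_r^*\mathbf D_r^*\hat{\mathbf P}$. If $\|\mathbf U_r^*\mathbf D_r^*\|_{2\to\infty}\le C_1$ and $\|\hat{\mathbf A}\|_{2\to\infty},\|\mathbf V_r^*\|_{2\to\infty}\le C_2$, then with probability at least $1-1/n$, $$\max_{i\in\mathcal N_2}\beta_{1,i}(\hat{\mathbf A})\le C_1^2C_2\Big\{\pi_{\max}\|\hat{\mathbf A}-\mathbf A^*\|_F^2+4\pi_{\max}^{1/2}C_2(\log n)^{1/2}\|\hat{\mathbf A}-\mathbf A^*\|_F+4C_2^2\log n\Big\}.$$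
   Context: $\mathbf M^*\in\mathbb R^{n\times p}$ is deterministic of rank $r$ with compact SVD $\mathbf U_r^*\mathbf D_r^*(\mathbf V_r^* )^T$ ($\mathbf U_r^*,\mathbf V_r^*$ with orthonormal columns). The $\omega_{ij}\in\{0,1\}$ are independent Bernoulli$(\pi_{ij})$, $\pi_{\max}=\max\pi_{ij}$. $\mathcal N_2\subset[n]$ is fixed. With rows $\hat{\mathbf a}_j^T,\mathbf a_j^{*T},\boldsymbol\theta_i^{*T}$ of $\hat{\mathbf A},\mathbf A^*,\boldsymbol\Theta^*$: $\beta_{1,i}(\hat{\mathbf A})=\sup_{\|\mathbf u\|=1}\sum_{j=1}^p\omega_{ij}((\hat{\mathbf a}_j-\mathbf a_j^* )^T\boldsymbol\theta_i^* )^2|\hat{\mathbf a}_j^T\mathbf u|$. $\|\cdot\|_F$ Frobenius norm, $\|X\|_{2\to\infty}$ maximal row Euclidean norm. *)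

theory Defs
  imports "HOL-Probability.Probability"
begin

text \<open>Matrices are represented as functions nat => nat => real, with explicit
  row/column bounds; indices are 0-based.\<close>

definition matmul :: "(nat \<Rightarrow> nat \<Rightarrow> real) \<Rightarrow> (nat \<Rightarrow> nat \<Rightarrow> real) \<Rightarrow> nat \<Rightarrow> nat \<Rightarrow> nat \<Rightarrow> real"
  where "matmul A B m = (\<lambda>i k. \<Sum>l<m. A i l * B l k)"

definition orthonormal_cols :: "nat \<Rightarrow> nat \<Rightarrow> (nat \<Rightarrow> nat \<Rightarrow> real) \<Rightarrow> bool"
  where "orthonormal_cols nr nc U \<longleftrightarrow>
    (\<forall>k<nc. \<forall>l<nc. (\<Sum>i<nr. U i k * U i l) = (if k = l then 1 else 0))"

definition frob_norm :: "nat \<Rightarrow> nat \<Rightarrow> (nat \<Rightarrow> nat \<Rightarrow> real) \<Rightarrow> real"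
  where "frob_norm nr nc A = sqrt (\<Sum>i<nr. \<Sum>j<nc. (A i j)\<^sup>2)"

definition two_inf_norm :: "nat \<Rightarrow> nat \<Rightarrow> (nat \<Rightarrow> nat \<Rightarrow> real) \<Rightarrow> real"
  where "two_inf_norm nr nc A =
    Max (insert 0 ((\<lambda>i. sqrt (\<Sum>j<nc. (A i j)\<^sup>2)) ` {..<nr}))"

text \<open>beta_{1,i}(Ahat) = sup_{||u||=1} sum_j w_ij ((ahat_j - a*_j)^T theta*_i)^2 |ahat_j^T u|,
  where w_ij are given as the 0/1 function wi, Theta* row i is theta.\<close>
definition beta1 :: "nat \<Rightarrow> nat \<Rightarrow> (nat \<Rightarrow> bool) \<Rightarrow> (nat \<Rightarrow> nat \<Rightarrow> real)
    \<Rightarrow> (nat \<Rightarrow> nat \<Rightarrow> real) \<Rightarrow> (nat \<Rightarrow> real) \<Rightarrow> real"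
  where "beta1 p r wi Ahat Astar theta =
    Sup ((\<lambda>u. \<Sum>j<p. of_bool (wi j) * (\<Sum>k<r. (Ahat j k - Astar j k) * theta k)\<^sup>2
                  * \<bar>\<Sum>k<r. Ahat j k * u k\<bar>)
         ` {u. (\<Sum>k<r. (u k)\<^sup>2) = 1})"

end

theory Submission
  imports Defs
begin

text \<open>
  Deterministically, Cauchy-Schwarz and the fact that the orthogonal matrix P
  does not increase row norms give beta_1i <= C1^2 C2 sum_j omega_ij W_j, where
  W_j = |a_j - a*_j|^2 lies in [0, 4 C2^2]. The weights are functions of (A, P), which is
  independent of the Bernoulli row omega_i; as the joint law is the product of the marginals, it
  suffices to bound the tail for every fixed value of the weights (Fubini). For fixed weights a
  Chernoff bound, with the exponent chosen through ln (1 + y) >= 2y / (2 + y), gives the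
  Bernstein-type estimate sum_j omega_ij W_j <= pi_max W + 4 C2 sqrt (pi_max W log n) + 4 C2^2 log n
  outside an event of probability n^-2, where W = sum_j W_j. A union bound over the at most n
  rows finishes the proof.
\<close>

section \<open>Chernoff bounds for weighted Bernoulli sums\<close>

lemma ln_one_plus_ge:
  fixes y :: real
  assumes "0 \<le> y"
  shows "2 * y / (2 + y) \<le> ln (1 + y)"
proof -
  define f where "f t = ln (1 + t) - 2 * t / (2 + t)" for t :: real
  have "f 0 \<le> f y"
  proof (rule DERIV_nonneg_imp_nondecreasing[OF assms])
    fix t :: real assume t: "0 \<le> t" "t \<le> y"
    have "(f has_real_derivative 1 / (1 + t) - 4 / (2 + t)\<^sup>2) (at t)"
      unfolding f_def using t
      by (auto intro!: derivative_eq_intros simp: power2_eq_square field_simps)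
    moreover have "4 / (2 + t)\<^sup>2 \<le> 1 / (1 + t)"
      using t by (simp add: divide_simps power2_eq_square algebra_simps)
    ultimately show "\<exists>d. (f has_real_derivative d) (at t) \<and> 0 \<le> d" by auto
  qed
  then show ?thesis by (simp add: f_def)
qed

text \<open>With a^2 = pi_max W / b and l^2 = L, the left-hand side is the Chernoff exponent at
  rate kappa / b for the threshold b (a + l)^2.\<close>
lemma exists_chernoff_rate:
  fixes a l :: real
  assumes a: "0 \<le> a" and l: "0 < l"
  shows "\<exists>\<kappa>>0. a\<^sup>2 * (exp \<kappa> - 1) - \<kappa> * (a + l)\<^sup>2 \<le> - 2 * l\<^sup>2"
proof (cases "a = 0")
  case True
  then show ?thesis by (intro exI[of _ 2]) simp
next
  case False
  with a have a: "0 < a" by simp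
  define \<kappa> where "\<kappa> = 2 * ln (1 + l / a)"
  have \<kappa>: "0 < \<kappa>" using a l by (simp add: \<kappa>_def ln_gt_zero)
  have "0 < 1 + l / a" using a l by (simp add: add_pos_pos)
  then have "exp \<kappa> = (1 + l / a)\<^sup>2"
    by (simp add: \<kappa>_def exp_of_nat_mult[of 2, simplified] power2_eq_square)
  then have growth: "a\<^sup>2 * (exp \<kappa> - 1) = 2 * a * l + l\<^sup>2"
    using a by (simp add: power2_eq_square field_simps)
  have "4 * l / (2 * a + l) \<le> \<kappa>"
    using ln_one_plus_ge[of "l / a"] a l by (simp add: \<kappa>_def field_simps)
  then have "4 * l / (2 * a + l) * (a + l)\<^sup>2 \<le> \<kappa> * (a + l)\<^sup>2"
    by (rule mult_right_mono) simp
  moreover have "l * (2 * a + 3 * l) \<le> 4 * l / (2 * a + l) * (a + l)\<^sup>2"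
    using a l by (simp add: field_simps power2_eq_square)
  ultimately show ?thesis
    using growth \<kappa> by (intro exI[of _ \<kappa>]) (simp add: power2_eq_square algebra_simps)
qed

lemma bernoulli_mgf_le:
  fixes q pm w b s :: real
  assumes "0 \<le> q" "q \<le> pm" "0 \<le> w" "w \<le> b" "0 < b" "0 \<le> s"
  shows "1 + q * (exp (s * w) - 1) \<le> exp (pm * w / b * (exp (s * b) - 1))"
proof -
  have "exp (w / b * (s * b)) - 1 \<le> w / b * (exp (s * b) - 1)"
    using convex_onD[OF exp_convex, of "w / b" 0 "s * b"] assms by (simp add: algebra_simps)
  then have "exp (s * w) - 1 \<le> w / b * (exp (s * b) - 1)"
    using assms by (simp add: mult.commute)
  moreover have "0 \<le> exp (s * w) - 1"
    using assms by simp
  ultimately have "q * (exp (s * w) - 1) \<le> pm * (w / b * (exp (s * b) - 1))"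
    using assms by (intro mult_mono) auto
  also have "1 + pm * (w / b * (exp (s * b) - 1)) \<le> exp (pm * (w / b * (exp (s * b) - 1)))"
    by (rule exp_ge_add_one_self)
  finally show ?thesis by (simp add: ac_simps)
qed

lemma (in prob_space) expectation_exp_bernoulli:
  assumes X: "X \<in> measurable M (count_space UNIV)"
    and bern: "distr M (count_space UNIV) X = measure_pmf (bernoulli_pmf q)"
    and q: "0 \<le> q" "q \<le> 1"
  shows "expectation (\<lambda>x. exp (c * of_bool (X x))) = 1 + q * (exp c - 1)"
proof -
  have "expectation (\<lambda>x. exp (c * of_bool (X x)))
      = integral\<^sup>L (distr M (count_space UNIV) X) (\<lambda>t. exp (c * of_bool t))"
    by (simp add: integral_distr[OF X])
  also have "\<dots> = 1 + q * (exp c - 1)"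
    using q by (simp add: bern algebra_simps)
  finally show ?thesis .
qed

lemma (in prob_space) weighted_bernoulli_chernoff:
  fixes X :: "'j \<Rightarrow> 'a \<Rightarrow> bool" and q w :: "'j \<Rightarrow> real"
  assumes J: "finite J"
    and indep: "indep_vars (\<lambda>_. count_space UNIV) X J"
    and bern: "\<And>j. j \<in> J \<Longrightarrow> distr M (count_space UNIV) (X j) = measure_pmf (bernoulli_pmf (q j))"
    and q: "\<And>j. j \<in> J \<Longrightarrow> 0 \<le> q j \<and> q j \<le> 1 \<and> q j \<le> pm"
    and w: "\<And>j. j \<in> J \<Longrightarrow> 0 \<le> w j \<and> w j \<le> b"
    and b: "0 < b" and s: "0 < s"
  shows "prob {x \<in> space M. B \<le> (\<Sum>j\<in>J. of_bool (X j x) * w j)}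
    \<le> exp (pm * (\<Sum>j\<in>J. w j) / b * (exp (s * b) - 1) - s * B)"
proof -
  define Y where "Y j x = exp (s * w j * of_bool (X j x))" for j x
  have rv: "X j \<in> measurable M (count_space UNIV)" if "j \<in> J" for j
    using indep that by (auto simp: indep_vars_def)
  have indep_Y: "indep_vars (\<lambda>_. borel) Y J"
    unfolding Y_def by (rule indep_vars_compose2[OF indep]) simp
  have Y_int: "integrable M (Y j)" if "j \<in> J" for j
  proof (rule integrable_const_bound[where B = "exp (s * b)"])
    show "AE x in M. norm (Y j x) \<le> exp (s * b)"
      using w[OF that] s by (auto simp: Y_def intro!: mult_left_mono)
  qed (use indep_Y that in \<open>auto simp: indep_vars_def\<close>)
  have exp_S: "exp (s * (\<Sum>j\<in>J. of_bool (X j x) * w j)) = (\<Prod>j\<in>J. Y j x)" for x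
    by (simp add: Y_def exp_sum[OF J, symmetric] sum_distrib_left mult_ac)
  have prod_int: "integrable M (\<lambda>x. \<Prod>j\<in>J. Y j x)"
    by (rule indep_vars_integrable[OF J indep_Y Y_int])
  have "prob {x \<in> space M. B \<le> (\<Sum>j\<in>J. of_bool (X j x) * w j)}
      \<le> exp (- s * B) * (\<integral>x \<in> space M. exp (s * (\<Sum>j\<in>J. of_bool (X j x) * w j)) \<partial>M)"
    using s integrable_mult_indicator[OF sets.top prod_int]
    by (intro Chernoff_ineq_ge) (simp_all add: exp_S set_integrable_def)
  also have "(\<integral>x \<in> space M. exp (s * (\<Sum>j\<in>J. of_bool (X j x) * w j)) \<partial>M) = (\<Prod>j\<in>J. expectation (Y j))"
    using prod_int indep_vars_lebesgue_integral[OF J indep_Y Y_int]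
    by (simp add: exp_S set_integral_space)
  also have "\<dots> \<le> (\<Prod>j\<in>J. exp (pm * w j / b * (exp (s * b) - 1)))"
  proof (rule prod_mono)
    fix j assume j: "j \<in> J"
    have "expectation (Y j) = 1 + q j * (exp (s * w j) - 1)"
      unfolding Y_def using q[OF j] by (intro expectation_exp_bernoulli rv bern j) auto
    moreover have "0 \<le> exp (s * w j) - 1"
      using w[OF j] s by simp
    ultimately show "0 \<le> expectation (Y j) \<and> expectation (Y j) \<le> exp (pm * w j / b * (exp (s * b) - 1))"
      using q[OF j] w[OF j] b s bernoulli_mgf_le[of "q j" pm "w j" b s] by simp
  qed
  also have "\<dots> = exp (pm * (\<Sum>j\<in>J. w j) / b * (exp (s * b) - 1))"
    by (simp add: exp_sum[OF J, symmetric] sum_distrib_left sum_distrib_right sum_divide_distrib)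
  finally show ?thesis
    by (simp add: mult_left_mono exp_diff exp_minus field_simps)
qed

lemma (in prob_space) weighted_bernoulli_tail:
  fixes X :: "'j \<Rightarrow> 'a \<Rightarrow> bool" and q w :: "'j \<Rightarrow> real"
  assumes J: "finite J"
    and indep: "indep_vars (\<lambda>_. count_space UNIV) X J"
    and bern: "\<And>j. j \<in> J \<Longrightarrow> distr M (count_space UNIV) (X j) = measure_pmf (bernoulli_pmf (q j))"
    and q: "\<And>j. j \<in> J \<Longrightarrow> 0 \<le> q j \<and> q j \<le> 1 \<and> q j \<le> pm" and pm: "0 \<le> pm"
    and w: "\<And>j. j \<in> J \<Longrightarrow> 0 \<le> w j \<and> w j \<le> b" and b: "0 \<le> b"
    and L: "0 < L"
  shows "prob {x \<in> space M. pm * (\<Sum>j\<in>J. w j) + 2 * sqrt (pm * b * L * (\<Sum>j\<in>J. w j)) + b * L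
      < (\<Sum>j\<in>J. of_bool (X j x) * w j)} \<le> exp (- 2 * L)"
proof (cases "b = 0")
  case True
  with w have "\<And>j. j \<in> J \<Longrightarrow> w j = 0"
    by force
  with True show ?thesis by simp
next
  case False
  with b have b: "0 < b" by simp
  define W where "W = (\<Sum>j\<in>J. w j)"
  define a where "a = sqrt (pm * W / b)"
  define l where "l = sqrt L"
  have W: "0 \<le> W" unfolding W_def using w by (intro sum_nonneg) auto
  have a: "0 \<le> a" "a\<^sup>2 = pm * W / b"
    unfolding a_def using pm W b by auto
  have l: "0 < l" "l\<^sup>2 = L"
    unfolding l_def using L by auto
  obtain \<kappa> where \<kappa>: "0 < \<kappa>" "a\<^sup>2 * (exp \<kappa> - 1) - \<kappa> * (a + l)\<^sup>2 \<le> - 2 * l\<^sup>2"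
    using exists_chernoff_rate[OF a(1) l(1)] by blast
  have "b * a = sqrt (pm * b * W)"
    using b by (simp add: a_def real_sqrt_mult real_sqrt_divide) (simp add: field_simps)
  then have bound: "pm * W + 2 * sqrt (pm * b * L * W) + b * L = b * (a + l)\<^sup>2"
    using a l b by (simp add: power2_eq_square algebra_simps real_sqrt_mult l_def)
  have "(\<lambda>x. of_bool (X j x) :: real) \<in> borel_measurable M" if "j \<in> J" for j
  proof (rule measurable_compose[where g = "\<lambda>t. of_bool t"])
    show "X j \<in> measurable M (count_space UNIV)"
      using indep that by (auto simp: indep_vars_def)
  qed simp
  then have "(\<lambda>x. \<Sum>j\<in>J. of_bool (X j x) * w j) \<in> borel_measurable M"
    by (intro borel_measurable_sum borel_measurable_times) auto
  then have "prob {x \<in> space M. b * (a + l)\<^sup>2 < (\<Sum>j\<in>J. of_bool (X j x) * w j)}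
      \<le> prob {x \<in> space M. b * (a + l)\<^sup>2 \<le> (\<Sum>j\<in>J. of_bool (X j x) * w j)}"
    by (intro finite_measure_mono) auto
  also have "\<dots> \<le> exp (pm * W / b * (exp (\<kappa> / b * b) - 1) - \<kappa> / b * (b * (a + l)\<^sup>2))"
    unfolding W_def using \<kappa> b
    by (intro weighted_bernoulli_chernoff[OF J indep bern q w]) auto
  also have "\<dots> = exp (a\<^sup>2 * (exp \<kappa> - 1) - \<kappa> * (a + l)\<^sup>2)"
    using a b by simp
  also have "\<dots> \<le> exp (- 2 * L)"
    using \<kappa> l by simp
  finally show ?thesis
    unfolding W_def[symmetric] bound .
qed

section \<open>Conditioning on an independent random element\<close>

lemma (in prob_space) distr_pair_eq_pair_distr:
  assumes X: "X \<in> measurable M S" and Y: "Y \<in> measurable M T"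
    and indep: "indep_set (sets (vimage_algebra (space M) X S)) (sets (vimage_algebra (space M) Y T))"
  shows "distr M (S \<Otimes>\<^sub>M T) (\<lambda>x. (X x, Y x)) = distr M S X \<Otimes>\<^sub>M distr M T Y"
proof (rule pair_measure_eqI[symmetric])
  interpret PX: prob_space "distr M S X" by (rule prob_space_distr[OF X])
  interpret PY: prob_space "distr M T Y" by (rule prob_space_distr[OF Y])
  show "sigma_finite_measure (distr M S X)" "sigma_finite_measure (distr M T Y)"
    by unfold_locales
  show "sets (distr M S X \<Otimes>\<^sub>M distr M T Y) = sets (distr M (S \<Otimes>\<^sub>M T) (\<lambda>x. (X x, Y x)))"
    by (simp cong: sets_pair_measure_cong)
  fix A B assume "A \<in> sets (distr M S X)" "B \<in> sets (distr M T Y)"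
  then have A: "A \<in> sets S" and B: "B \<in> sets T" by simp_all
  have "X -` A \<inter> space M \<in> sets (vimage_algebra (space M) X S)"
    using A measurable_space[OF X] by (auto simp: sets_vimage_algebra2)
  moreover have "Y -` B \<inter> space M \<in> sets (vimage_algebra (space M) Y T)"
    using B measurable_space[OF Y] by (auto simp: sets_vimage_algebra2)
  ultimately have "prob ((X -` A \<inter> space M) \<inter> (Y -` B \<inter> space M))
      = prob (X -` A \<inter> space M) * prob (Y -` B \<inter> space M)"
    by (rule indep_setD[OF indep])
  moreover have "(\<lambda>x. (X x, Y x)) -` (A \<times> B) \<inter> space M = (X -` A \<inter> space M) \<inter> (Y -` B \<inter> space M)"
    by auto
  ultimately show "emeasure (distr M S X) A * emeasure (distr M T Y) B
      = emeasure (distr M (S \<Otimes>\<^sub>M T) (\<lambda>x. (X x, Y x))) (A \<times> B)"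
    using A B X Y
    by (simp add: emeasure_distr emeasure_eq_measure ennreal_mult[symmetric] measurable_Pair)
qed

lemma (in prob_space) prob_indep_pair_le_slices:
  assumes X: "X \<in> measurable M S" and Y: "Y \<in> measurable M T"
    and indep: "indep_set (sets (vimage_algebra (space M) X S)) (sets (vimage_algebra (space M) Y T))"
    and G: "G \<in> sets (S \<Otimes>\<^sub>M T)"
    and slice: "\<And>a. a \<in> space S \<Longrightarrow> prob {x \<in> space M. (a, Y x) \<in> G} \<le> c"
  shows "prob {x \<in> space M. (X x, Y x) \<in> G} \<le> c"
proof -
  interpret PX: prob_space "distr M S X" by (rule prob_space_distr[OF X])
  interpret PY: prob_space "distr M T Y" by (rule prob_space_distr[OF Y])
  have c: "0 \<le> c"
  proof -
    obtain x where "x \<in> space M" using not_empty by blast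
    then have "prob {x' \<in> space M. (X x, Y x') \<in> G} \<le> c"
      using slice measurable_space[OF X] by blast
    then show ?thesis using measure_nonneg order_trans by blast
  qed
  have slice': "emeasure (distr M T Y) (Pair a -` G) \<le> c" if "a \<in> space S" for a
  proof -
    have "Pair a -` G \<in> sets T" using G by (rule sets_Pair1)
    then have "emeasure (distr M T Y) (Pair a -` G) = prob {x \<in> space M. (a, Y x) \<in> G}"
      by (simp add: emeasure_distr[OF Y] emeasure_eq_measure vimage_def Int_def conj_commute)
    then show ?thesis using slice[OF that] by (simp add: ennreal_leI)
  qed
  have "emeasure M {x \<in> space M. (X x, Y x) \<in> G} = emeasure (distr M (S \<Otimes>\<^sub>M T) (\<lambda>x. (X x, Y x))) G"
    using G X Y by (simp add: emeasure_distr measurable_Pair vimage_def Int_def conj_commute)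
  also have "\<dots> = (\<integral>\<^sup>+a. emeasure (distr M T Y) (Pair a -` G) \<partial>distr M S X)"
    using G by (simp add: distr_pair_eq_pair_distr[OF X Y indep] PY.emeasure_pair_measure_alt)
  also have "\<dots> \<le> (\<integral>\<^sup>+a. c \<partial>distr M S X)"
    by (intro nn_integral_mono) (simp add: slice')
  also have "\<dots> = c"
    using PX.emeasure_space_1 by simp
  finally show ?thesis
    using c by (simp add: emeasure_eq_measure)
qed

lemma (in prob_space) weighted_bernoulli_tail_indep_weights:
  fixes Y :: "'a \<Rightarrow> 'j \<Rightarrow> bool" and q :: "'j \<Rightarrow> real" and Z :: "'a \<Rightarrow> 'b" and f :: "'b \<Rightarrow> 'j \<Rightarrow> real"
  assumes J: "finite J" "J \<subseteq> I"
    and Z: "Z \<in> measurable M S" and Y: "Y \<in> measurable M (PiM I (\<lambda>_. count_space UNIV))"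
    and indep_ZY: "indep_set (sets (vimage_algebra (space M) Z S))
      (sets (vimage_algebra (space M) Y (PiM I (\<lambda>_. count_space UNIV))))"
    and indep: "indep_vars (\<lambda>_. count_space UNIV) (\<lambda>j x. Y x j) J"
    and bern: "\<And>j. j \<in> J \<Longrightarrow> distr M (count_space UNIV) (\<lambda>x. Y x j) = measure_pmf (bernoulli_pmf (q j))"
    and q: "\<And>j. j \<in> J \<Longrightarrow> 0 \<le> q j \<and> q j \<le> 1 \<and> q j \<le> pm" and pm: "0 \<le> pm"
    and f_meas: "\<And>j. j \<in> J \<Longrightarrow> (\<lambda>z. f z j) \<in> borel_measurable S"
    and f: "\<And>x j. x \<in> space M \<Longrightarrow> j \<in> J \<Longrightarrow> 0 \<le> f (Z x) j \<and> f (Z x) j \<le> b" and b: "0 \<le> b"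
    and L: "0 < L"
  defines "A \<equiv> {x \<in> space M. pm * (\<Sum>j\<in>J. f (Z x) j) + 2 * sqrt (pm * b * L * (\<Sum>j\<in>J. f (Z x) j)) + b * L
      < (\<Sum>j\<in>J. of_bool (Y x j) * f (Z x) j)}"
  shows "A \<in> events" and "prob A \<le> exp (- 2 * L)"
proof -
  define T where "T = PiM I (\<lambda>_. count_space (UNIV :: bool set))"
  \<comment> \<open>Clamped weights: bounded on all of space S, not only on the range of Z, as the slicing needs.\<close>
  define w where "w z j = max 0 (min b (f z j))" for z j
  define bound where "bound z = pm * (\<Sum>j\<in>J. w z j) + 2 * sqrt (pm * b * L * (\<Sum>j\<in>J. w z j)) + b * L" for z
  define G where "G = {zy \<in> space (S \<Otimes>\<^sub>M T). bound (fst zy) < (\<Sum>j\<in>J. of_bool (snd zy j) * w (fst zy) j)}"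
  have w_Z: "w (Z x) j = f (Z x) j" if "x \<in> space M" "j \<in> J" for x j
    using f[OF that] by (simp add: w_def)
  have w_meas: "(\<lambda>zy. w (fst zy) j) \<in> borel_measurable (S \<Otimes>\<^sub>M T)" if "j \<in> J" for j
    unfolding w_def using f_meas[OF that] by measurable
  have y_meas: "(\<lambda>zy. of_bool (snd zy j) :: real) \<in> borel_measurable (S \<Otimes>\<^sub>M T)" if "j \<in> I" for j
    unfolding T_def using that by measurable
  have G: "G \<in> sets (S \<Otimes>\<^sub>M T)"
    unfolding G_def bound_def
    by (intro borel_measurable_less borel_measurable_add borel_measurable_times borel_measurable_sum
        borel_measurable_const measurable_compose[OF _ borel_measurable_sqrt] w_meas y_meas)
      (use J(2) in auto)
  have A_G: "A = {x \<in> space M. (Z x, Y x) \<in> G}"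
    using measurable_space[OF Z] measurable_space[OF Y]
    by (auto simp: A_def G_def T_def bound_def space_pair_measure w_Z cong: sum.cong)
  show "A \<in> events"
    unfolding A_G using measurable_sets[OF measurable_Pair[OF Z Y[folded T_def]] G]
    by (simp add: vimage_def Int_def conj_commute)
  show "prob A \<le> exp (- 2 * L)"
    unfolding A_G
  proof (rule prob_indep_pair_le_slices[OF Z Y[folded T_def] indep_ZY[folded T_def] G])
    fix a assume a: "a \<in> space S"
    have "{x \<in> space M. (a, Y x) \<in> G} = {x \<in> space M. bound a < (\<Sum>j\<in>J. of_bool (Y x j) * w a j)}"
      using a measurable_space[OF Y] by (auto simp: G_def T_def space_pair_measure)
    also have "prob \<dots> \<le> exp (- 2 * L)"
      unfolding bound_def using b
      by (intro weighted_bernoulli_tail[OF J(1) indep bern q pm _ b L]) (auto simp: w_def)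
    finally show "prob {x \<in> space M. (a, Y x) \<in> G} \<le> exp (- 2 * L)" .
  qed
qed

section \<open>Row norms\<close>

lemma sum_sq_mult_orthonormal_le:
  fixes x :: "nat \<Rightarrow> real"
  assumes "orthonormal_cols r r P"
  shows "(\<Sum>k<r. (\<Sum>l<r. x l * P l k)\<^sup>2) \<le> (\<Sum>l<r. (x l)\<^sup>2)"
proof -
  define c where "c k = (\<Sum>l<r. x l * P l k)" for k
  define y where "y l = (\<Sum>k<r. c k * P l k)" for l
  have orth: "(\<Sum>l<r. P l k * P l k') = (if k = k' then 1 else 0)" if "k < r" "k' < r" for k k'
    using assms that by (simp add: orthonormal_cols_def)
  have "(\<Sum>l<r. x l * y l) = (\<Sum>l<r. \<Sum>k<r. c k * (x l * P l k))"
    by (simp add: y_def sum_distrib_left mult_ac)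
  also have "\<dots> = (\<Sum>k<r. c k * c k)"
    by (subst sum.swap) (simp add: c_def sum_distrib_left)
  finally have xy: "(\<Sum>l<r. x l * y l) = (\<Sum>k<r. (c k)\<^sup>2)"
    by (simp add: power2_eq_square)
  have "(\<Sum>l<r. (y l)\<^sup>2) = (\<Sum>l<r. \<Sum>k<r. \<Sum>k'<r. c k * c k' * (P l k * P l k'))"
    by (simp add: y_def power2_eq_square sum_product mult_ac)
  also have "\<dots> = (\<Sum>k<r. \<Sum>l<r. \<Sum>k'<r. c k * c k' * (P l k * P l k'))"
    by (rule sum.swap)
  also have "\<dots> = (\<Sum>k<r. \<Sum>k'<r. \<Sum>l<r. c k * c k' * (P l k * P l k'))"
    by (rule sum.cong[OF refl], rule sum.swap)
  also have "\<dots> = (\<Sum>k<r. \<Sum>k'<r. c k * c k' * (\<Sum>l<r. P l k * P l k'))"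
    by (simp add: sum_distrib_left)
  also have "\<dots> = (\<Sum>k<r. \<Sum>k'<r. if k = k' then (c k)\<^sup>2 else 0)"
    by (intro sum.cong refl) (simp add: orth power2_eq_square)
  also have "\<dots> = (\<Sum>k<r. (c k)\<^sup>2)"
    by (simp add: sum.delta)
  finally have yy: "(\<Sum>l<r. (y l)\<^sup>2) = (\<Sum>k<r. (c k)\<^sup>2)" .
  \<comment> \<open>Bessel: expand 0 \<le> |x - y|^2, where y is the projection of x onto the columns of P.\<close>
  have "0 \<le> (\<Sum>l<r. (x l - y l)\<^sup>2)"
    by (simp add: sum_nonneg)
  also have "\<dots> = (\<Sum>l<r. (x l)\<^sup>2) - 2 * (\<Sum>l<r. x l * y l) + (\<Sum>l<r. (y l)\<^sup>2)"
    by (simp add: power2_diff sum.distrib sum_subtractf sum_distrib_left mult_ac)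
  finally show ?thesis
    unfolding xy yy c_def by simp
qed

lemma row_norm_le_two_inf_norm:
  assumes "i < nr"
  shows "sqrt (\<Sum>j<nc. (A i j)\<^sup>2) \<le> two_inf_norm nr nc A"
  unfolding two_inf_norm_def using assms by (intro Max_ge) auto

lemma two_inf_norm_nonneg: "0 \<le> two_inf_norm nr nc A"
  unfolding two_inf_norm_def by (intro Max_ge) auto

lemma row_sum_sq_le_of_two_inf_norm_le:
  assumes "i < nr" "two_inf_norm nr nc A \<le> C"
  shows "(\<Sum>j<nc. (A i j)\<^sup>2) \<le> C\<^sup>2"
proof -
  have "sqrt (\<Sum>j<nc. (A i j)\<^sup>2) \<le> C"
    using row_norm_le_two_inf_norm[OF assms(1)] assms(2) by (rule order_trans)
  then show ?thesis
    by (simp add: real_sqrt_le_iff sum_nonneg real_sqrt_le_mono sqrt_le_D)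
qed

lemma row_sum_sq_matmul_le:
  assumes "orthonormal_cols r r P" "i < nr" "two_inf_norm nr r A \<le> C"
  shows "(\<Sum>k<r. (matmul A P r i k)\<^sup>2) \<le> C\<^sup>2"
  using sum_sq_mult_orthonormal_le[OF assms(1), of "A i"] row_sum_sq_le_of_two_inf_norm_le[OF assms(2,3)]
  unfolding matmul_def by (rule order_trans)

lemma sum_sq_diff_le:
  fixes a b :: "'i \<Rightarrow> real"
  shows "(\<Sum>k\<in>K. (a k - b k)\<^sup>2) \<le> 2 * (\<Sum>k\<in>K. (a k)\<^sup>2) + 2 * (\<Sum>k\<in>K. (b k)\<^sup>2)"
proof -
  have "(a k - b k)\<^sup>2 \<le> 2 * (a k)\<^sup>2 + 2 * (b k)\<^sup>2" for k
    using zero_le_power2[of "a k + b k"] by (simp add: power2_eq_square algebra_simps)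
  then have "(\<Sum>k\<in>K. (a k - b k)\<^sup>2) \<le> (\<Sum>k\<in>K. 2 * (a k)\<^sup>2 + 2 * (b k)\<^sup>2)"
    by (rule sum_mono)
  then show ?thesis
    by (simp add: sum.distrib sum_distrib_left)
qed

lemma abs_sum_mult_le:
  fixes a b :: "'i \<Rightarrow> real"
  shows "\<bar>\<Sum>k\<in>K. a k * b k\<bar> \<le> sqrt (\<Sum>k\<in>K. (a k)\<^sup>2) * sqrt (\<Sum>k\<in>K. (b k)\<^sup>2)"
proof -
  have "\<bar>\<Sum>k\<in>K. a k * b k\<bar> \<le> (\<Sum>k\<in>K. \<bar>a k\<bar> * \<bar>b k\<bar>)"
    using sum_abs[of "\<lambda>k. a k * b k" K] by (simp add: abs_mult)
  also have "\<dots> \<le> L2_set a K * L2_set b K"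
    by (rule L2_set_mult_ineq)
  finally show ?thesis
    by (simp add: L2_set_def)
qed

lemma row_residual_sum_sq_le:
  assumes "orthonormal_cols r r P" "j < p" "two_inf_norm p r A \<le> C" "two_inf_norm p r V \<le> C"
  shows "(\<Sum>k<r. (A j k - matmul V P r j k)\<^sup>2) \<le> 4 * C\<^sup>2"
  using sum_sq_diff_le[of "A j" "matmul V P r j" "{..<r}"]
    row_sum_sq_le_of_two_inf_norm_le[OF assms(2,3)] row_sum_sq_matmul_le[OF assms(1,2,4)]
  by simp

lemma beta1_le:
  assumes r: "0 < r"
    and theta: "(\<Sum>k<r. (\<theta> k)\<^sup>2) \<le> C1\<^sup>2"
    and rows: "\<And>j. j < p \<Longrightarrow> sqrt (\<Sum>k<r. (Ah j k)\<^sup>2) \<le> C2"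
  shows "beta1 p r wi Ah As \<theta> \<le> C1\<^sup>2 * C2 * (\<Sum>j<p. of_bool (wi j) * (\<Sum>k<r. (Ah j k - As j k)\<^sup>2))"
  unfolding beta1_def
proof (rule cSup_least)
  have "(\<Sum>k<r. (if k = 0 then 1 else 0 :: real)\<^sup>2) = (\<Sum>k<r. if k = 0 then 1 else 0)"
    by (intro sum.cong) auto
  also have "\<dots> = 1"
    using r by simp
  finally have "(\<lambda>k. if k = 0 then 1 else 0) \<in> {u. (\<Sum>k<r. (u k)\<^sup>2) = (1::real)}"
    by simp
  then show "(\<lambda>u. \<Sum>j<p. of_bool (wi j) * (\<Sum>k<r. (Ah j k - As j k) * \<theta> k)\<^sup>2 * \<bar>\<Sum>k<r. Ah j k * u k\<bar>)
      ` {u. (\<Sum>k<r. (u k)\<^sup>2) = 1} \<noteq> {}"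
    using image_is_empty by (metis (no_types, lifting) empty_iff)
next
  fix s assume "s \<in> (\<lambda>u. \<Sum>j<p. of_bool (wi j) * (\<Sum>k<r. (Ah j k - As j k) * \<theta> k)\<^sup>2 * \<bar>\<Sum>k<r. Ah j k * u k\<bar>)
      ` {u. (\<Sum>k<r. (u k)\<^sup>2) = 1}"
  then obtain u where u: "(\<Sum>k<r. (u k)\<^sup>2) = 1"
    and s: "s = (\<Sum>j<p. of_bool (wi j) * (\<Sum>k<r. (Ah j k - As j k) * \<theta> k)\<^sup>2 * \<bar>\<Sum>k<r. Ah j k * u k\<bar>)"
    by blast
  have "s \<le> (\<Sum>j<p. of_bool (wi j) * ((\<Sum>k<r. (Ah j k - As j k)\<^sup>2) * C1\<^sup>2) * C2)"
    unfolding s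
  proof (rule sum_mono)
    fix j assume j: "j \<in> {..<p}"
    have "(\<Sum>k<r. (Ah j k - As j k) * \<theta> k)\<^sup>2 \<le> (\<Sum>k<r. (Ah j k - As j k)\<^sup>2) * (\<Sum>k<r. (\<theta> k)\<^sup>2)"
      by (rule Cauchy_Schwarz_ineq_sum)
    also have "\<dots> \<le> (\<Sum>k<r. (Ah j k - As j k)\<^sup>2) * C1\<^sup>2"
      by (intro mult_left_mono theta sum_nonneg) auto
    finally have residual: "(\<Sum>k<r. (Ah j k - As j k) * \<theta> k)\<^sup>2 \<le> (\<Sum>k<r. (Ah j k - As j k)\<^sup>2) * C1\<^sup>2" .
    have "\<bar>\<Sum>k<r. Ah j k * u k\<bar> \<le> sqrt (\<Sum>k<r. (Ah j k)\<^sup>2) * sqrt (\<Sum>k<r. (u k)\<^sup>2)"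
      by (rule abs_sum_mult_le)
    also have "\<dots> \<le> C2"
      using rows j u by simp
    finally have direction: "\<bar>\<Sum>k<r. Ah j k * u k\<bar> \<le> C2" .
    have "(\<Sum>k<r. (Ah j k - As j k) * \<theta> k)\<^sup>2 * \<bar>\<Sum>k<r. Ah j k * u k\<bar>
        \<le> (\<Sum>k<r. (Ah j k - As j k)\<^sup>2) * C1\<^sup>2 * C2"
      by (rule mult_mono[OF residual direction]) (simp_all add: sum_nonneg)
    then have "of_bool (wi j) * ((\<Sum>k<r. (Ah j k - As j k) * \<theta> k)\<^sup>2 * \<bar>\<Sum>k<r. Ah j k * u k\<bar>)
        \<le> of_bool (wi j) * ((\<Sum>k<r. (Ah j k - As j k)\<^sup>2) * C1\<^sup>2 * C2)"
      by (rule mult_left_mono) simp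
    then show "of_bool (wi j) * (\<Sum>k<r. (Ah j k - As j k) * \<theta> k)\<^sup>2 * \<bar>\<Sum>k<r. Ah j k * u k\<bar>
        \<le> of_bool (wi j) * ((\<Sum>k<r. (Ah j k - As j k)\<^sup>2) * C1\<^sup>2) * C2"
      by (simp only: mult.assoc)
  qed
  also have "\<dots> = C1\<^sup>2 * C2 * (\<Sum>j<p. of_bool (wi j) * (\<Sum>k<r. (Ah j k - As j k)\<^sup>2))"
    unfolding sum_distrib_left[of "C1\<^sup>2 * C2"] by (intro sum.cong refl) (simp only: mult_ac)
  finally show "s \<le> C1\<^sup>2 * C2 * (\<Sum>j<p. of_bool (wi j) * (\<Sum>k<r. (Ah j k - As j k)\<^sup>2))" .
qed



lemma beta1_le_of_two_inf_norm:
  assumes "0 < r" "orthonormal_cols r r P" "i < n"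
    and "two_inf_norm n r \<Theta> \<le> C1" "two_inf_norm p r Ah \<le> C2"
  shows "beta1 p r wi Ah As (matmul \<Theta> P r i) \<le> C1\<^sup>2 * C2 * (\<Sum>j<p. of_bool (wi j) * (\<Sum>k<r. (Ah j k - As j k)\<^sup>2))"
proof (rule beta1_le[OF assms(1)])
  show "(\<Sum>k<r. (matmul \<Theta> P r i k)\<^sup>2) \<le> C1\<^sup>2"
    using assms(2-4) by (rule row_sum_sq_matmul_le)
  show "sqrt (\<Sum>k<r. (Ah j k)\<^sup>2) \<le> C2" if "j < p" for j
    using row_norm_le_two_inf_norm[OF that] assms(5) by (rule order_trans)
qed

section \<open>The tail bound for one row and the union over rows\<close>

lemma residual_borel_measurable:
  fixes V :: "nat \<Rightarrow> nat \<Rightarrow> real"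
  assumes "j < p"
  shows "(\<lambda>z. \<Sum>k<r. (fst z (j, k) - (\<Sum>l<r. V j l * snd z (l, k)))\<^sup>2)
    \<in> borel_measurable (PiM ({..<p} \<times> {..<r}) (\<lambda>_. borel) \<Otimes>\<^sub>M PiM ({..<r} \<times> {..<r}) (\<lambda>_. borel))"
proof -
  have coord: "(\<lambda>z. fst z (j, k)) \<in> borel_measurable
      (PiM ({..<p} \<times> {..<r}) (\<lambda>_. borel) \<Otimes>\<^sub>M PiM ({..<r} \<times> {..<r}) (\<lambda>_. borel))"
    "(\<lambda>z. snd z (l, k)) \<in> borel_measurable
      (PiM ({..<p} \<times> {..<r}) (\<lambda>_. borel) \<Otimes>\<^sub>M PiM ({..<r} \<times> {..<r}) (\<lambda>_. (borel :: real measure)))"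
    if "k < r" "l < r" for k l
    using that assms
    by (auto intro!: measurable_compose[OF measurable_fst measurable_component_singleton]
        measurable_compose[OF measurable_snd measurable_component_singleton])
  show ?thesis
    by (intro borel_measurable_sum borel_measurable_power borel_measurable_diff
        borel_measurable_times borel_measurable_const coord) auto
qed

lemma (in prob_space) row_residual_tail:
  fixes n p r i :: nat and N2 :: "nat set" and \<omega> :: "nat \<Rightarrow> nat \<Rightarrow> 'a \<Rightarrow> bool"
    and Ahat Phat :: "'a \<Rightarrow> nat \<Rightarrow> nat \<Rightarrow> real" and V :: "nat \<Rightarrow> nat \<Rightarrow> real"
    and \<pi> :: "nat \<Rightarrow> nat \<Rightarrow> real" and pm C L :: real
  defines "XA \<equiv> (\<lambda>x. (restrict (\<lambda>(j, k). Ahat x j k) ({..<p} \<times> {..<r}),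
                 restrict (\<lambda>(k, l). Phat x k l) ({..<r} \<times> {..<r})))"
    and "Y\<omega> \<equiv> (\<lambda>x. restrict (\<lambda>(i, j). \<omega> i j x) (N2 \<times> {..<p}))"
    and "W \<equiv> (\<lambda>x j. \<Sum>k<r. (Ahat x j k - matmul V (Phat x) r j k)\<^sup>2)"
  assumes indep: "indep_vars (\<lambda>_. count_space UNIV) (\<lambda>(i, j). \<omega> i j) ({..<n} \<times> {..<p})"
    and bern: "\<forall>i<n. \<forall>j<p. distr M (count_space UNIV) (\<omega> i j) = measure_pmf (bernoulli_pmf (\<pi> i j))"
    and \<pi>: "\<forall>i<n. \<forall>j<p. 0 \<le> \<pi> i j \<and> \<pi> i j \<le> 1 \<and> \<pi> i j \<le> pm" and pm: "0 \<le> pm"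
    and i: "i \<in> N2" and N2: "N2 \<subseteq> {..<n}"
    and XA: "XA \<in> measurable M (PiM ({..<p} \<times> {..<r}) (\<lambda>_. borel) \<Otimes>\<^sub>M PiM ({..<r} \<times> {..<r}) (\<lambda>_. borel))"
    and Y\<omega>: "Y\<omega> \<in> measurable M (PiM (N2 \<times> {..<p}) (\<lambda>_. count_space UNIV))"
    and indep_XY: "indep_set
      (sets (vimage_algebra (space M) XA (PiM ({..<p} \<times> {..<r}) (\<lambda>_. borel) \<Otimes>\<^sub>M PiM ({..<r} \<times> {..<r}) (\<lambda>_. borel))))
      (sets (vimage_algebra (space M) Y\<omega> (PiM (N2 \<times> {..<p}) (\<lambda>_. count_space UNIV))))"
    and orthP: "\<forall>x\<in>space M. orthonormal_cols r r (Phat x)"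
    and Ahat: "\<forall>x\<in>space M. two_inf_norm p r (Ahat x) \<le> C" and V: "two_inf_norm p r V \<le> C"
    and L: "0 < L"
  defines "B \<equiv> {x \<in> space M. pm * (\<Sum>j<p. W x j) + 4 * sqrt pm * C * sqrt L * sqrt (\<Sum>j<p. W x j) + 4 * C\<^sup>2 * L
      < (\<Sum>j<p. of_bool (\<omega> i j x) * W x j)}"
  shows "B \<in> events" and "prob B \<le> exp (- 2 * L)"
proof -
  \<comment> \<open>Row i of the Bernoulli array is the block J of Y\<omega>; its weights are a function res of the value of XA.\<close>
  define J where "J = {i} \<times> {..<p}"
  define res where "res z jj = (\<Sum>k<r. (fst z (snd jj, k) - (\<Sum>l<r. V (snd jj) l * snd z (l, k)))\<^sup>2)"
    for z :: "(nat \<times> nat \<Rightarrow> real) \<times> (nat \<times> nat \<Rightarrow> real)" and jj :: "nat \<times> nat"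
  have i_n: "i < n" using i N2 by auto
  have J: "finite J" "J \<subseteq> N2 \<times> {..<p}" using i by (auto simp: J_def)
  have sum_J: "(\<Sum>jj\<in>J. g jj) = (\<Sum>j<p. g (i, j))" for g :: "nat \<times> nat \<Rightarrow> real"
  proof -
    have "J = Pair i ` {..<p}" by (auto simp: J_def)
    then show ?thesis by (simp add: sum.reindex inj_on_def)
  qed
  have Y\<omega>_J: "(\<lambda>x. Y\<omega> x jj) = (\<lambda>(i, j). \<omega> i j) jj" if "jj \<in> J" for jj
    using that i by (auto simp: Y\<omega>_def J_def)
  have res_XA: "res (XA x) (i, j) = W x j" if "j < p" for x i j
    using that by (simp add: res_def W_def XA_def matmul_def)
  have "indep_vars (\<lambda>_. count_space UNIV) (\<lambda>(i, j). \<omega> i j) J"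
    by (rule indep_vars_subset[OF indep]) (use i_n in \<open>auto simp: J_def\<close>)
  then have indep_J: "indep_vars (\<lambda>_. count_space UNIV) (\<lambda>jj x. Y\<omega> x jj) J"
    by (rule indep_vars_cong[THEN iffD1, rotated 3]) (simp_all add: Y\<omega>_J)
  have bern_J: "distr M (count_space UNIV) (\<lambda>x. Y\<omega> x jj) = measure_pmf (bernoulli_pmf ((\<lambda>(i, j). \<pi> i j) jj))"
    if "jj \<in> J" for jj
    using Y\<omega>_J[OF that] bern i_n that by (auto simp: J_def)
  have \<pi>_J: "0 \<le> (\<lambda>(i, j). \<pi> i j) jj \<and> (\<lambda>(i, j). \<pi> i j) jj \<le> 1 \<and> (\<lambda>(i, j). \<pi> i j) jj \<le> pm"
    if "jj \<in> J" for jj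
    using \<pi> i_n that by (auto simp: J_def)
  have res_meas: "(\<lambda>z. res z jj) \<in> borel_measurable
      (PiM ({..<p} \<times> {..<r}) (\<lambda>_. borel) \<Otimes>\<^sub>M PiM ({..<r} \<times> {..<r}) (\<lambda>_. borel))" if "jj \<in> J" for jj
    unfolding res_def using that by (intro residual_borel_measurable) (auto simp: J_def)
  have res_le: "0 \<le> res (XA x) jj \<and> res (XA x) jj \<le> 4 * C\<^sup>2" if "x \<in> space M" "jj \<in> J" for x jj
    using that res_XA row_residual_sum_sq_le[OF orthP[rule_format] _ Ahat[rule_format] V]
    by (auto simp: J_def W_def sum_nonneg)
  have "0 \<le> 4 * C\<^sup>2" by simp
  note tail = weighted_bernoulli_tail_indep_weights[OF J XA Y\<omega> indep_XY indep_J bern_J \<pi>_J pm res_meas res_le this L]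
  have C: "0 \<le> C"
    using two_inf_norm_nonneg V by (rule order_trans)
  have "B = {x \<in> space M. pm * (\<Sum>jj\<in>J. res (XA x) jj)
      + 2 * sqrt (pm * (4 * C\<^sup>2) * L * (\<Sum>jj\<in>J. res (XA x) jj)) + 4 * C\<^sup>2 * L
      < (\<Sum>jj\<in>J. of_bool (Y\<omega> x jj) * res (XA x) jj)}"
    using i C by (simp add: B_def sum_J res_XA Y\<omega>_def real_sqrt_mult mult_ac)
  with tail show "B \<in> events" and "prob B \<le> exp (- 2 * L)"
    by (simp_all only:)
qed

lemma (in prob_space) prob_diff_UN_ge:
  assumes "finite I" "\<And>i. i \<in> I \<Longrightarrow> B i \<in> events" "\<And>i. i \<in> I \<Longrightarrow> prob (B i) \<le> c"
  shows "1 - real (card I) * c \<le> prob (space M - (\<Union>i\<in>I. B i))"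
proof -
  have "prob (\<Union>i\<in>I. B i) \<le> (\<Sum>i\<in>I. prob (B i))"
    using assms by (intro measure_UNION_le) auto
  also have "\<dots> \<le> real (card I) * c"
    using assms sum_bounded_above[of I "\<lambda>i. prob (B i)" c] by auto
  finally show ?thesis
    using assms by (subst prob_compl) auto
qed

theorem mainTheorem14:
  fixes M :: "'a measure"
    and n p r :: nat
    and Mstar U D V :: "nat \<Rightarrow> nat \<Rightarrow> real"
    and \<omega> :: "nat \<Rightarrow> nat \<Rightarrow> 'a \<Rightarrow> bool"
    and \<pi> :: "nat \<Rightarrow> nat \<Rightarrow> real"
    and N2 :: "nat set"
    and Ahat Phat :: "'a \<Rightarrow> nat \<Rightarrow> nat \<Rightarrow> real"
    and C1 C2 :: real
  defines "XA \<equiv> (\<lambda>x. (restrict (\<lambda>(j, k). Ahat x j k) ({..<p} \<times> {..<r}),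
                 restrict (\<lambda>(k, l). Phat x k l) ({..<r} \<times> {..<r})))"
    and "Y\<omega> \<equiv> (\<lambda>x. restrict (\<lambda>(i, j). \<omega> i j x) (N2 \<times> {..<p}))"
  assumes "prob_space M"
    and "0 < r" and "r \<le> n" and "r \<le> p"
    and "orthonormal_cols n r U" and "orthonormal_cols p r V"
    and "\<forall>k<r. \<forall>l<r. k \<noteq> l \<longrightarrow> D k l = 0" and "\<forall>k<r. D k k > 0"
    and "\<forall>i<n. \<forall>j<p. Mstar i j = (\<Sum>k<r. U i k * D k k * V j k)"
    and "\<forall>i<n. \<forall>j<p. 0 \<le> \<pi> i j \<and> \<pi> i j \<le> 1"
    and "prob_space.indep_vars M (\<lambda>_. count_space UNIV) (\<lambda>(i, j). \<omega> i j) ({..<n} \<times> {..<p})"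
    and "\<forall>i<n. \<forall>j<p. distr M (count_space UNIV) (\<omega> i j) = measure_pmf (bernoulli_pmf (\<pi> i j))"
    and "N2 \<subseteq> {..<n}"
    and "\<forall>x\<in>space M. orthonormal_cols r r (Phat x)"
    and "XA \<in> measurable M (PiM ({..<p} \<times> {..<r}) (\<lambda>_. borel) \<Otimes>\<^sub>M PiM ({..<r} \<times> {..<r}) (\<lambda>_. borel))"
    and "Y\<omega> \<in> measurable M (PiM (N2 \<times> {..<p}) (\<lambda>_. count_space UNIV))"
    and "prob_space.indep_set M
           (sets (vimage_algebra (space M) XA
              (PiM ({..<p} \<times> {..<r}) (\<lambda>_. borel) \<Otimes>\<^sub>M PiM ({..<r} \<times> {..<r}) (\<lambda>_. borel))))
           (sets (vimage_algebra (space M) Y\<omega> (PiM (N2 \<times> {..<p}) (\<lambda>_. count_space UNIV))))"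
    and "two_inf_norm n r (matmul U D r) \<le> C1"
    and "\<forall>x\<in>space M. two_inf_norm p r (Ahat x) \<le> C2"
    and "two_inf_norm p r V \<le> C2"
  shows "\<exists>E\<in>sets M. measure M E \<ge> 1 - 1 / real n \<and>
    (\<forall>x\<in>E. \<forall>i\<in>N2.
      (let pimax = Max ((\<lambda>(i, j). \<pi> i j) ` ({..<n} \<times> {..<p}));
           Astar = matmul V (Phat x) r;
           Theta = matmul (matmul U D r) (Phat x) r;
           F = frob_norm p r (\<lambda>j k. Ahat x j k - Astar j k)
       in beta1 p r (\<lambda>j. \<omega> i j x) (Ahat x) Astar (Theta i)
          \<le> C1\<^sup>2 * C2 * (pimax * F\<^sup>2 + 4 * sqrt pimax * C2 * sqrt (ln (real n)) * F
                           + 4 * C2\<^sup>2 * ln (real n))))"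
proof -
  interpret prob_space M by fact
  define pm where "pm = Max ((\<lambda>(i, j). \<pi> i j) ` ({..<n} \<times> {..<p}))"
  define L where "L = ln (real n)"
  define W where "W x j = (\<Sum>k<r. (Ahat x j k - matmul V (Phat x) r j k)\<^sup>2)" for x j
  define bad where "bad i = {x \<in> space M. pm * (\<Sum>j<p. W x j) + 4 * sqrt pm * C2 * sqrt L * sqrt (\<Sum>j<p. W x j)
      + 4 * C2\<^sup>2 * L < (\<Sum>j<p. of_bool (\<omega> i j x) * W x j)}" for i
  define E where "E = space M - (\<Union>i\<in>N2. bad i)"
  have pm_ge: "\<pi> i j \<le> pm" if "i < n" "j < p" for i j
    unfolding pm_def using that by (intro Max_ge) auto
  have \<pi>: "\<forall>i<n. \<forall>j<p. 0 \<le> \<pi> i j \<and> \<pi> i j \<le> 1 \<and> \<pi> i j \<le> pm"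
    using assms(12) pm_ge by simp
  have pm: "0 \<le> pm"
    using \<pi> assms(4-6) by force
  have N2: "finite N2" "real (card N2) \<le> real n"
    using finite_subset[OF assms(15)] card_mono[OF finite_lessThan assms(15)] by auto
  consider "n = 1" | "1 < n"
    using assms(4,5) by linarith
  then show ?thesis
  proof cases
    case 1
    then show ?thesis by (intro bexI[of _ "{}"]) auto
  next
    case 2
    then have L: "0 < L" by (simp add: L_def)
    have bad: "bad i \<in> events" "prob (bad i) \<le> exp (- 2 * L)" if "i \<in> N2" for i
      unfolding bad_def W_def
      by (intro row_residual_tail[OF assms(13,14) \<pi> pm that assms(15) assms(17-19)[unfolded assms(1,2)]
          assms(16,21,22) L])+
    have "exp (2 * L) = (real n)\<^sup>2"
      using exp_of_nat_mult[of 2 L] 2 by (simp add: L_def)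
    then have "real (card N2) * exp (- 2 * L) \<le> real n / (real n)\<^sup>2"
      using N2 by (simp add: exp_minus inverse_eq_divide divide_right_mono)
    also have "\<dots> = 1 / real n"
      by (simp add: power2_eq_square)
    finally have prob_E: "1 - 1 / real n \<le> prob E"
      using prob_diff_UN_ge[OF N2(1), of bad] bad unfolding E_def by fastforce
    have beta: "beta1 p r (\<lambda>j. \<omega> i j x) (Ahat x) (matmul V (Phat x) r) (matmul (matmul U D r) (Phat x) r i)
        \<le> C1\<^sup>2 * C2 * (pm * (frob_norm p r (\<lambda>j k. Ahat x j k - matmul V (Phat x) r j k))\<^sup>2
          + 4 * sqrt pm * C2 * sqrt L * frob_norm p r (\<lambda>j k. Ahat x j k - matmul V (Phat x) r j k)
          + 4 * C2\<^sup>2 * L)" if "x \<in> E" "i \<in> N2" for x i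
    proof -
      have x: "x \<in> space M" and good: "x \<notin> bad i" and i: "i < n"
        using that assms(15) by (auto simp: E_def)
      have F: "frob_norm p r (\<lambda>j k. Ahat x j k - matmul V (Phat x) r j k) = sqrt (\<Sum>j<p. W x j)"
        by (simp add: frob_norm_def W_def)
      have F2: "(sqrt (\<Sum>j<p. W x j))\<^sup>2 = (\<Sum>j<p. W x j)"
        by (simp add: W_def sum_nonneg)
      have "beta1 p r (\<lambda>j. \<omega> i j x) (Ahat x) (matmul V (Phat x) r) (matmul (matmul U D r) (Phat x) r i)
          \<le> C1\<^sup>2 * C2 * (\<Sum>j<p. of_bool (\<omega> i j x) * W x j)"
        unfolding W_def using assms(16,21) x
        by (intro beta1_le_of_two_inf_norm[OF assms(4) _ i assms(20)]) simp_all
      also have "\<dots> \<le> C1\<^sup>2 * C2 * (pm * (\<Sum>j<p. W x j) + 4 * sqrt pm * C2 * sqrt L * sqrt (\<Sum>j<p. W x j)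
          + 4 * C2\<^sup>2 * L)"
        using good x two_inf_norm_nonneg[of p r V] assms(22)
        by (intro mult_left_mono) (simp_all add: bad_def not_less)
      finally show ?thesis
        unfolding F F2 .
    qed
    show ?thesis
      unfolding Let_def pm_def[symmetric] L_def[symmetric]
    proof (rule bexI[of _ E])
      show "E \<in> sets M"
        using bad N2(1) by (auto simp: E_def)
    qed (use prob_E beta in simp)
  qed
qed

end
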